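(* Let ${\mathbf{X}}\in\mathbb{R}_+^{m\times n}$ and let ${\mathbf{A}}\in\mathbb{R}^{k\times m}$ satisfy ${\mathbf{A}}{\mathbf{A}}^T={\mathbf{I}}_k$. Let ${\mathbf{U}}_0\in\mathbb{R}_+^{m\times r}$, ${\mathbf{V}}_0\in\mathbb{R}_+^{n\times r}$ be a minimizer of $\|{\mathbf{X}}-{\mathbf{U}}{\mathbf{V}}^T\|_F^2$ over ${\mathbf{U}}\in\mathbb{R}_+^{m\times r},{\mathbf{V}}\in\mathbb{R}_+^{n\times r}$, and set ${\mathbf{X}}_0={\mathbf{U}}_0{\mathbf{V}}_0^T$. Let $\lambda>0$ and let $(\tilde{\mathbf{U}},\tilde{\mathbf{V}})$ be any minimizer, over ${\mathbf{U}}\in\mathbb{R}_+^{m\times r},{\mathbf{V}}\in\mathbb{R}_+^{n\times r}$, of $$\|{\mathbf{A}}({\mathbf{X}}-{\mathbf{U}}{\mathbf{V}}^T)\|_F^2+\lambda\|P_{\mathbf{A}}^\perp{\mathbf{U}}{\mathbf{V}}^T\|_F^2,$$ where $P_{\mathbf{A}}^\perp={\mathbf{I}}_m-{\mathbf{A}}^T{\mathbf{A}}$. Then $\tilde{\mathbf{X}}:=\tilde{\mathbf{U}}\tilde{\mathbf{V}}^T$ satisfies $$\frac{\|{\mathbf{X}}-\tilde{\mathbf{X}}\|_F^2}{\|{\mathbf{X}}\|_F^2}\le c_\lambda\left[\frac{\|{\mathbf{X}}-{\mathbf{X}}_0\|_F^2}{\|{\mathbf{X}}\|_F^2}+\frac{\|P_{\mathbf{A}}^\perp{\mathbf{X}}\|_F^2}{\|{\mathbf{X}}\|_F^2}\right],\qquad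 c_\lambda=\max(2/\lambda,\,6,\,2\lambda+2).$$
   Context: $\mathbb{R}_+^{a\times b}$ denotes the set of $a\times b$ matrices with all entries nonnegative; ${\mathbf{X}}\neq 0$ is implicit in the ratios. $\|\cdot\|_F$ is the Frobenius norm. *)

theory Defs
  imports "HOL-Analysis.Analysis"
begin

definition frob_sq :: "real^'n^'m \<Rightarrow> real" where
  "frob_sq M = (\<Sum>i\<in>UNIV. \<Sum>j\<in>UNIV. (M $ i $ j)^2)"

definition nonneg_mat :: "real^'n^'m \<Rightarrow> bool" where
  "nonneg_mat M \<longleftrightarrow> (\<forall>i j. M $ i $ j \<ge> 0)"

definition perp_proj :: "real^'m^'k \<Rightarrow> real^'m^'m" where
  "perp_proj A = mat 1 - transpose A ** A"

end

theory Submission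
  imports Defs
begin

text \<open>Write \<open>P = I - A\<^sup>T A\<close> and \<open>Y = U\<tilde> V\<tilde>\<^sup>T\<close>. Since \<open>A A\<^sup>T = I\<close>, the Frobenius norm splits
  orthogonally as \<open>\<parallel>M\<parallel>\<^sup>2 = \<parallel>A M\<parallel>\<^sup>2 + \<parallel>P M\<parallel>\<^sup>2\<close>. Comparing the penalized objective at \<open>Y\<close> with its
  value at the feasible \<open>X\<^sub>0\<close>, and moving \<open>P\<close> between \<open>X\<close>, \<open>X\<^sub>0\<close> and \<open>Y\<close> with
  \<open>\<parallel>u - v\<parallel>\<^sup>2 \<le> 2\<parallel>u\<parallel>\<^sup>2 + 2\<parallel>v\<parallel>\<^sup>2\<close>, bounds \<open>\<parallel>A(X - Y)\<parallel>\<^sup>2 + \<lambda>\<parallel>P Y\<parallel>\<^sup>2\<close>, while \<open>\<parallel>X - Y\<parallel>\<^sup>2\<close> needs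
  weight \<open>2\<close> on \<open>\<parallel>P Y\<parallel>\<^sup>2\<close>; trading \<open>2\<close> against \<open>\<lambda>\<close> in the regimes \<open>\<lambda> \<ge> 2\<close> and \<open>\<lambda> < 2\<close>
  produces \<open>c\<^sub>\<lambda>\<close>. Only the feasibility of \<open>(U\<^sub>0, V\<^sub>0)\<close> is used, not its optimality.\<close>

lemma frob_sq_eq_norm_power2: "frob_sq M = (norm M)\<^sup>2"
  unfolding power2_norm_eq_inner by (simp add: frob_sq_def inner_vec_def power2_eq_square)

lemma frob_sq_nonneg: "frob_sq M \<ge> 0"
  by (simp add: frob_sq_eq_norm_power2)

lemma frob_sq_pos: "M \<noteq> 0 \<Longrightarrow> frob_sq M > 0"
  by (simp add: frob_sq_eq_norm_power2)

lemma matrix_diff_ldistrib: "(A::'a::ring_1^'n^'m) ** (B - C) = A ** B - A ** C"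
  by (simp add: vec_eq_iff matrix_matrix_mult_def right_diff_distrib sum_subtractf)

lemma matrix_diff_rdistrib: "((A::'a::ring_1^'n^'m) - B) ** C = A ** C - B ** C"
  by (simp add: vec_eq_iff matrix_matrix_mult_def left_diff_distrib sum_subtractf)

lemma inner_matrix_mult_left:
  "inner ((A::real^'m^'k) ** M) (N::real^'n^'k) = inner (M::real^'n^'m) (transpose A ** N)"
proof -
  have "inner (A ** M) N = (\<Sum>i\<in>UNIV. \<Sum>j\<in>UNIV. \<Sum>l\<in>UNIV. A$i$l * M$l$j * N$i$j)"
    by (simp add: inner_vec_def matrix_matrix_mult_def sum_distrib_right)
  also have "\<dots> = (\<Sum>i\<in>UNIV. \<Sum>l\<in>UNIV. \<Sum>j\<in>UNIV. A$i$l * M$l$j * N$i$j)"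
    by (intro sum.cong refl sum.swap)
  also have "\<dots> = (\<Sum>l\<in>UNIV. \<Sum>i\<in>UNIV. \<Sum>j\<in>UNIV. A$i$l * M$l$j * N$i$j)"
    by (rule sum.swap)
  also have "\<dots> = (\<Sum>l\<in>UNIV. \<Sum>j\<in>UNIV. \<Sum>i\<in>UNIV. A$i$l * M$l$j * N$i$j)"
    by (intro sum.cong refl sum.swap)
  also have "\<dots> = inner M (transpose A ** N)"
    by (simp add: inner_vec_def matrix_matrix_mult_def sum_distrib_left transpose_def mult_ac)
  finally show ?thesis .
qed

lemma power2_norm_diff_le:
  fixes x y :: "'a::real_normed_vector"
  shows "(norm (x - y))\<^sup>2 \<le> 2 * (norm x)\<^sup>2 + 2 * (norm y)\<^sup>2"
proof -
  have "(norm (x - y))\<^sup>2 \<le> (norm x + norm y)\<^sup>2"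
    by (simp add: norm_triangle_ineq4 power_mono)
  also have "\<dots> \<le> 2 * (norm x)\<^sup>2 + 2 * (norm y)\<^sup>2"
    using sum_squares_bound[of "norm x" "norm y"] by (simp add: power2_sum power2_diff)
  finally show ?thesis .
qed

lemma frob_sq_diff_le: "frob_sq (M - N) \<le> 2 * frob_sq M + 2 * frob_sq N"
  unfolding frob_sq_eq_norm_power2 by (rule power2_norm_diff_le)

lemma frob_sq_perp_proj_split:
  assumes "A ** transpose A = mat 1"
  shows "frob_sq (M::real^'n^'m) = frob_sq ((A::real^'m^'k) ** M) + frob_sq (perp_proj A ** M)"
proof -
  let ?proj = "transpose A ** (A ** M)"
  have perp: "perp_proj A ** M = M - ?proj"
    by (simp add: perp_proj_def matrix_diff_rdistrib matrix_mul_assoc)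
  have "inner ?proj (M - ?proj) = inner (A ** M) (A ** M - A ** ?proj)"
    by (metis inner_matrix_mult_left transpose_transpose matrix_diff_ldistrib)
  also have "A ** ?proj = A ** M"
    by (simp add: matrix_mul_assoc assms)
  finally have "orthogonal ?proj (perp_proj A ** M)"
    by (simp add: orthogonal_def perp)
  then have "(norm M)\<^sup>2 = (norm ?proj)\<^sup>2 + (norm (perp_proj A ** M))\<^sup>2"
    using norm_add_Pythagorean[of ?proj "perp_proj A ** M"] by (simp add: perp)
  moreover have "(norm ?proj)\<^sup>2 = (norm (A ** M))\<^sup>2"
    using inner_matrix_mult_left[of "transpose A" "A ** M" ?proj] \<open>A ** ?proj = A ** M\<close>
    by (simp add: power2_norm_eq_inner)
  ultimately show ?thesis
    by (simp add: frob_sq_eq_norm_power2)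
qed

lemma penalty_tradeoff_bound:
  fixes a q b p F lambda :: real
  assumes "a \<ge> 0" "q \<ge> 0" "b \<ge> 0" "p \<ge> 0" "F \<ge> 0" "lambda > 0"
    and tradeoff: "b + lambda * p \<le> a + lambda * (2 * F + 2 * q)"
  shows "b + 2 * p + 2 * F \<le> max (max (2 / lambda) 6) (2 * lambda + 2) * (a + q + F)"
proof -
  define c where "c = max (max (2 / lambda) 6) (2 * lambda + 2)"
  have c: "2 / lambda \<le> c" "6 \<le> c" "2 * lambda + 2 \<le> c"
    by (simp_all add: c_def)
  show ?thesis
  proof (cases "lambda \<ge> 2")
    case True
    have "b + 2 * p + 2 * F \<le> b + lambda * p + 2 * F"
      using True \<open>p \<ge> 0\<close> by (simp add: mult_right_mono)
    also have "\<dots> \<le> 1 * a + (2 * lambda) * q + (2 * lambda + 2) * F"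
      using tradeoff by (simp add: algebra_simps)
    also have "\<dots> \<le> c * a + c * q + c * F"
      using c assms by (intro add_mono mult_right_mono) auto
    finally show ?thesis
      by (simp add: c_def algebra_simps)
  next
    case False
    have "1 \<le> 2 / lambda"
      using False assms by simp
    then have "b + 2 * p \<le> (2 / lambda) * b + 2 * p"
      using mult_right_mono[of 1 "2 / lambda" b] assms by simp
    also have "\<dots> = (2 / lambda) * (b + lambda * p)"
      using assms by (simp add: field_simps)
    also have "\<dots> \<le> (2 / lambda) * (a + lambda * (2 * F + 2 * q))"
      using tradeoff assms by (intro mult_left_mono) auto
    also have "\<dots> = (2 / lambda) * a + 4 * F + 4 * q"
      using assms by (simp add: field_simps)
    finally have "b + 2 * p + 2 * F \<le> (2 / lambda) * a + 4 * q + 6 * F"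
      by linarith
    also have "\<dots> \<le> c * a + c * q + c * F"
      using c assms by (intro add_mono mult_right_mono) auto
    finally show ?thesis
      by (simp add: c_def algebra_simps)
  qed
qed

lemma penalized_fit_error_bound:
  fixes X Y X0 :: "real^'n^'m" and A :: "real^'m^'k" and lambda :: real
  assumes A_orth: "A ** transpose A = mat 1" and "lambda > 0"
    and better: "frob_sq (A ** (X - Y)) + lambda * frob_sq (perp_proj A ** Y)
                 \<le> frob_sq (A ** (X - X0)) + lambda * frob_sq (perp_proj A ** X0)"
  shows "frob_sq (X - Y)
         \<le> max (max (2 / lambda) 6) (2 * lambda + 2) * (frob_sq (X - X0) + frob_sq (perp_proj A ** X))"
proof -
  let ?P = "perp_proj A"
  have "frob_sq (?P ** X0) \<le> 2 * frob_sq (?P ** X) + 2 * frob_sq (?P ** (X - X0))"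
    using frob_sq_diff_le[of "?P ** X" "?P ** (X - X0)"] by (simp add: matrix_diff_ldistrib)
  then have tradeoff: "frob_sq (A ** (X - Y)) + lambda * frob_sq (?P ** Y)
      \<le> frob_sq (A ** (X - X0)) + lambda * (2 * frob_sq (?P ** X) + 2 * frob_sq (?P ** (X - X0)))"
    using better mult_left_mono[of _ _ lambda] \<open>lambda > 0\<close> by (smt (verit))
  have "frob_sq (X - Y) = frob_sq (A ** (X - Y)) + frob_sq (?P ** (X - Y))"
    by (rule frob_sq_perp_proj_split[OF A_orth])
  also have "\<dots> \<le> frob_sq (A ** (X - Y)) + 2 * frob_sq (?P ** Y) + 2 * frob_sq (?P ** X)"
    using frob_sq_diff_le[of "?P ** X" "?P ** Y"] by (simp add: matrix_diff_ldistrib)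
  also have "\<dots> \<le> max (max (2 / lambda) 6) (2 * lambda + 2)
                 * (frob_sq (A ** (X - X0)) + frob_sq (?P ** (X - X0)) + frob_sq (?P ** X))"
    using penalty_tradeoff_bound[OF _ _ _ _ _ \<open>lambda > 0\<close> tradeoff] by (simp add: frob_sq_nonneg)
  also have "frob_sq (A ** (X - X0)) + frob_sq (?P ** (X - X0)) = frob_sq (X - X0)"
    by (rule frob_sq_perp_proj_split[OF A_orth, symmetric])
  finally show ?thesis .
qed

theorem mainTheorem2:
  fixes X :: "real^'n^'m" and A :: "real^'m^'k"
    and U0 :: "real^'r^'m" and V0 :: "real^'r^'n"
    and Ut :: "real^'r^'m" and Vt :: "real^'r^'n"
    and lambda :: real
  assumes X_nonneg: "nonneg_mat X"
    and X_nz: "X \<noteq> 0"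
    and A_orth: "A ** transpose A = mat 1"
    and U0_nonneg: "nonneg_mat U0" and V0_nonneg: "nonneg_mat V0"
    and min0: "\<And>U V. nonneg_mat (U :: real^'r^'m) \<Longrightarrow> nonneg_mat (V :: real^'r^'n) \<Longrightarrow>
                 frob_sq (X - U0 ** transpose V0) \<le> frob_sq (X - U ** transpose V)"
    and lam_pos: "lambda > 0"
    and Ut_nonneg: "nonneg_mat Ut" and Vt_nonneg: "nonneg_mat Vt"
    and mint: "\<And>U V. nonneg_mat (U :: real^'r^'m) \<Longrightarrow> nonneg_mat (V :: real^'r^'n) \<Longrightarrow>
                 frob_sq (A ** (X - Ut ** transpose Vt)) + lambda * frob_sq (perp_proj A ** (Ut ** transpose Vt))
                 \<le> frob_sq (A ** (X - U ** transpose V)) + lambda * frob_sq (perp_proj A ** (U ** transpose V))"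
  shows "frob_sq (X - Ut ** transpose Vt) / frob_sq X
         \<le> max (max (2 / lambda) 6) (2 * lambda + 2) *
           (frob_sq (X - U0 ** transpose V0) / frob_sq X + frob_sq (perp_proj A ** X) / frob_sq X)"
proof -
  have "frob_sq (X - Ut ** transpose Vt)
        \<le> max (max (2 / lambda) 6) (2 * lambda + 2)
          * (frob_sq (X - U0 ** transpose V0) + frob_sq (perp_proj A ** X))"
    by (rule penalized_fit_error_bound[OF A_orth lam_pos mint[OF U0_nonneg V0_nonneg]])
  then show ?thesis
    using frob_sq_pos[OF X_nz] by (simp add: divide_right_mono add_divide_distrib[symmetric])
qed

end
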